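(* Let $\rho\colon\mathrm{Isom}(\mathbf H^1_{\mathbb C})_o\to\mathrm{Isom}(\mathbf H^\infty_{\mathbb C})_o$ be an irreducible representation and let $t\in\mathbb R$ be such that the lift $\rho(g(\lambda,0))$ satisfies $\rho(g(\lambda,0))\eta_1=\lambda^t\eta_1$ for all $\lambda>0$ (i.e. $\chi(\lambda)=\lambda^t$). Then $0<t\le2$.
   Context: $\mathcal H$: separable complex Hilbert space with strongly non-degenerate Hermitian form $B$ (linear in first variable) of signature $(1,\infty)$; $\mathbf H^\infty_{\mathbb C}=\{[v]:B(v,v)>0\}$, $\cosh d([v],[w])=|B(v,w)|/\sqrt{B(v,v)B(w,w)}$, boundary = isotropic lines. $\mathbf H^1_{\mathbb C}$: $\mathbb C^2$ with $B(z,w)=z_1\bar w_1-z_2\bar w_2$, $\xi_{1,2}=(e_1\pm e_2)/\sqrt2$; $g(\lambda,b)\in SU(1,1)$ has matrix $\begin{pmatrix}\lambda&ib\\0&\lambda^{-1}\end{pmatrix}$ in basis $(\xi_1,\xi_2)$, $P=\{g(\lambda,b)\}$. Representations are orbitally continuous; irreducible = no fixed point in $\mathbf H^\infty_{\mathbb C}\cup\partial\mathbf H^\infty_{\mathbb C}$, no invariant pair of boundary points, no proper invariant complex hyperbolic subspace. For such $\rho$: $\eta_1$ = unique common fixed boundary point of $\rho(P)$, $\eta_2$ = other endpoint of the common axis of the $\rho(g(\lambda,0))$; isotropic representatives with $B(\eta_1,\eta_2)=1$. $\rho|_P$ lifts to a continuous homomorphism $P\to U(B)$ (still denoted $\rho$)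 with $B(\rho(g(\lambda,b))\eta_1,\eta_2)>0$; then $\rho(g(\lambda,b))\eta_1=\chi(\lambda)\eta_1$ for a continuous isomorphism $\chi\colon\mathbb R_{>0}\to\mathbb R_{>0}$, so $\chi(\lambda)=\lambda^t$ for some real $t$, and $t=\ell(\rho)$ is the displacement of $\rho$. *)

theory Defs
  imports "HOL-Analysis.Analysis"
begin

text \<open>Every separable complex Hilbert space with a strongly non-degenerate Hermitian
form of signature (1,infinity) is isomorphic to the following standard model:
square-summable sequences v :: nat => complex with
B(v,w) = v 0 * cnj (w 0) - sum over n>=1 of v n * cnj (w n)
(linear in the first variable).\<close>

type_synonym vec = "nat \<Rightarrow> complex"

definition Hsp :: "vec set" where
  "Hsp = {v. summable (\<lambda>n. (cmod (v n))^2)}"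

definition Bf :: "vec \<Rightarrow> vec \<Rightarrow> complex" where
  "Bf v w = v 0 * cnj (w 0) - (\<Sum>n. v (Suc n) * cnj (w (Suc n)))"

definition Qf :: "vec \<Rightarrow> real" where
  "Qf v = Re (Bf v v)"

definition smul :: "complex \<Rightarrow> vec \<Rightarrow> vec" where
  "smul c v = (\<lambda>n. c * v n)"

definition vadd :: "vec \<Rightarrow> vec \<Rightarrow> vec" where
  "vadd v w = (\<lambda>n. v n + w n)"

definition l2norm :: "vec \<Rightarrow> real" where
  "l2norm v = sqrt (\<Sum>n. (cmod (v n))^2)"

definition l2dist :: "vec \<Rightarrow> vec \<Rightarrow> real" where
  "l2dist v w = l2norm (\<lambda>n. v n - w n)"

definition cline :: "vec \<Rightarrow> vec set" where
  "cline v = {smul c v | c. True}"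

definition lines :: "vec set set" where
  "lines = {cline v | v. v \<in> Hsp \<and> v \<noteq> (\<lambda>_. 0)}"

definition lrep :: "vec set \<Rightarrow> vec" where
  "lrep L = (SOME v. v \<in> L \<and> v \<noteq> (\<lambda>_. 0))"

definition hyp_points :: "vec set set" where
  "hyp_points = {L \<in> lines. Qf (lrep L) > 0}"

definition bdry_points :: "vec set set" where
  "bdry_points = {L \<in> lines. Qf (lrep L) = 0}"

definition hdist :: "vec set \<Rightarrow> vec set \<Rightarrow> real" where
  "hdist L M = arcosh (cmod (Bf (lrep L) (lrep M)) / sqrt (Qf (lrep L) * Qf (lrep M)))"

definition unitaryB :: "(vec \<Rightarrow> vec) \<Rightarrow> bool" where
  "unitaryB T \<longleftrightarrow> T ` Hsp = Hsp \<and> inj_on T Hsp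
     \<and> (\<forall>v\<in>Hsp. \<forall>w\<in>Hsp. T (vadd v w) = vadd (T v) (T w))
     \<and> (\<forall>v\<in>Hsp. \<forall>c. T (smul c v) = smul c (T v))
     \<and> (\<forall>v\<in>Hsp. \<forall>w\<in>Hsp. Bf (T v) (T w) = Bf v w)"

text \<open>Elements of Isom(H^infinity_C)_o = PU(B), given by their action on lines
(interior points and boundary points).\<close>
definition isom_o :: "(vec set \<Rightarrow> vec set) \<Rightarrow> bool" where
  "isom_o F \<longleftrightarrow> (\<exists>T. unitaryB T \<and> (\<forall>L\<in>lines. F L = T ` L))"

definition Bc :: "complex^2 \<Rightarrow> complex^2 \<Rightarrow> complex" where
  "Bc z w = z$1 * cnj (w$1) - z$2 * cnj (w$2)"

definition SU11 :: "(complex^2^2) set" where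
  "SU11 = {M. det M = 1 \<and> (\<forall>z w. Bc (M *v z) (M *v w) = Bc z w)}"

text \<open>Change of basis: columns are xi_1=(e_1+e_2)/sqrt 2 and xi_2=(e_1-e_2)/sqrt 2; it is its own inverse.\<close>
definition Sxi :: "complex^2^2" where
  "Sxi = (\<chi> i j. complex_of_real (1 / sqrt 2) * (if i = 2 \<and> j = 2 then -1 else 1))"

text \<open>g(lambda,b): matrix [[lambda, i b],[0, 1/lambda]] in the basis (xi_1, xi_2).\<close>
definition gmat :: "real \<Rightarrow> real \<Rightarrow> complex^2^2" where
  "gmat l b = Sxi ** (\<chi> i j. if i = 1 then (if j = 1 then complex_of_real l else \<i> * complex_of_real b)
                               else (if j = 1 then 0 else complex_of_real (1 / l))) ** Sxi"

definition Pgrp :: "(complex^2^2) set" where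
  "Pgrp = {gmat l b | l b. l > 0}"

text \<open>A representation of Isom(H^1_C)_o = PSU(1,1) = SU(1,1)/{+-1} into
Isom(H^infinity_C)_o, given as a map on SU(1,1) which is a homomorphism and is
trivial on -1; orbitally continuous.\<close>
definition is_rep :: "(complex^2^2 \<Rightarrow> vec set \<Rightarrow> vec set) \<Rightarrow> bool" where
  "is_rep \<rho> \<longleftrightarrow>
     (\<forall>g\<in>SU11. isom_o (\<rho> g))
   \<and> (\<forall>g\<in>SU11. \<forall>h\<in>SU11. \<forall>L\<in>lines. \<rho> (g ** h) L = \<rho> g (\<rho> h L))
   \<and> (\<forall>L\<in>lines. \<rho> (- mat 1) L = L)
   \<and> (\<forall>x\<in>hyp_points. \<forall>g0\<in>SU11. \<forall>\<epsilon>>0. \<exists>\<delta>>0. \<forall>g\<in>SU11.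
        dist g g0 < \<delta> \<longrightarrow> hdist (\<rho> g x) (\<rho> g0 x) < \<epsilon>)"

definition closed_subspace :: "vec set \<Rightarrow> bool" where
  "closed_subspace W \<longleftrightarrow> W \<subseteq> Hsp \<and> (\<lambda>_. 0) \<in> W
     \<and> (\<forall>v\<in>W. \<forall>w\<in>W. vadd v w \<in> W) \<and> (\<forall>v\<in>W. \<forall>c. smul c v \<in> W)
     \<and> (\<forall>s w. (\<forall>n. s n \<in> W) \<and> w \<in> Hsp \<and> (\<lambda>n. l2dist (s n) w) \<longlonglongrightarrow> 0 \<longrightarrow> w \<in> W)"

definition irreducible_rep :: "(complex^2^2 \<Rightarrow> vec set \<Rightarrow> vec set) \<Rightarrow> bool" where
  "irreducible_rep \<rho> \<longleftrightarrow>
     \<comment> \<open>no fixed point in the space or its boundary\<close>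
     \<not> (\<exists>L \<in> hyp_points \<union> bdry_points. \<forall>g\<in>SU11. \<rho> g L = L)
     \<comment> \<open>no invariant pair of boundary points\<close>
   \<and> \<not> (\<exists>L1 \<in> bdry_points. \<exists>L2 \<in> bdry_points. L1 \<noteq> L2 \<and>
          (\<forall>g\<in>SU11. \<rho> g L1 \<in> {L1, L2} \<and> \<rho> g L2 \<in> {L1, L2}))
     \<comment> \<open>no proper invariant complex hyperbolic subspace\<close>
   \<and> \<not> (\<exists>W. closed_subspace W \<and> W \<noteq> Hsp \<and> (\<exists>v\<in>W. Qf v > 0) \<and>
          (\<forall>g\<in>SU11. \<forall>L\<in>hyp_points. L \<subseteq> W \<longrightarrow> \<rho> g L \<subseteq> W))"

end

theory Submission
  imports Defs
begin

(* Write u_b = g(1,b) and a_l = g(l,0), so that a_l u_b a_l^-1 = u_(l^2 b).  The eigenvalue of u_b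
   on eta1 is a character of (R,+) invariant under b |-> 2b, hence trivial, and a_l scales eta2 by
   l^-t.  Put f b = B(u_b eta2, eta2); conjugation gives f (l^2 b) = l^(2t) f b.  The vectors
   w_b = u_b eta2 - eta2 are B-orthogonal to eta1, where B is negative semidefinite, and
   B(w_b, w_b') = f (b - b') - f b - cnj (f b').
   If f 1 = 0, then w_1 and w_-1 are null and orthogonal to eta1 and eta2, hence zero, so all of P
   fixes [eta2], contradicting the uniqueness of eta1.  Otherwise continuity of b |-> u_b eta2 at 0
   is incompatible with |f 1| = 2^(nt) |f (2^-n)| unless t > 0, and Q(w_1 + w_-1) =
   2 (2^t - 4) Re (f 1) <= 0 gives 2^t <= 4; if Re (f 1) = 0 the vectors w_1, w_-1 are null, hence
   orthogonal, which forces 2^t = 2. *)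

lemma mult_le_scaled_am_gm:
  fixes a b s :: real
  assumes "s > 0"
  shows "a * b \<le> (a\<^sup>2 / s + s * b\<^sup>2) / 2"
proof -
  have "0 \<le> (a - s * b)\<^sup>2" by simp
  then show ?thesis using assms by (simp add: field_simps power2_eq_square)
qed

lemma le_sqrt_mult_if_le_scaled_am_gm:
  fixes A X Y :: real
  assumes "X \<ge> 0" "Y \<ge> 0" and bound: "\<And>s. s > 0 \<Longrightarrow> A \<le> (X / s + s * Y) / 2"
  shows "A \<le> sqrt X * sqrt Y"
proof (cases "X > 0 \<and> Y > 0")
  case True
  then have "X / (sqrt X / sqrt Y) + sqrt X / sqrt Y * Y = 2 * (sqrt X * sqrt Y)"
    by (simp add: field_simps)
  then show ?thesis using bound[of "sqrt X / sqrt Y"] True by simp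
next
  case False
  show ?thesis
  proof (rule ccontr)
    assume "\<not> A \<le> sqrt X * sqrt Y"
    then have "A > 0" using False assms(1,2) by auto
    show False
    proof (cases "X = 0")
      case True
      have "0 \<le> A * Y" using \<open>A > 0\<close> assms(2) by simp
      then show False using True bound[of "A / (Y + 1)"] \<open>A > 0\<close> assms(2)
        by (simp add: field_simps) (use \<open>0 \<le> A * Y\<close> in linarith)
    next
      case False
      then have "Y = 0" using \<open>\<not> (X > 0 \<and> Y > 0)\<close> assms(1,2) by auto
      have "0 \<le> A * X" using \<open>A > 0\<close> assms(1) by simp
      then show False using \<open>Y = 0\<close> bound[of "(X + 1) / A"] \<open>A > 0\<close> assms(1)
        by (simp add: field_simps) (use \<open>0 \<le> A * X\<close> in linarith)
    qed
  qed
qed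

lemma Hsp_summable: "x \<in> Hsp \<Longrightarrow> summable (\<lambda>n. (cmod (x n))\<^sup>2)"
  by (simp add: Hsp_def)

lemma summable_cmod_mult_Hsp:
  assumes "x \<in> Hsp" "y \<in> Hsp"
  shows "summable (\<lambda>n. cmod (x n) * cmod (y n))"
proof (rule summable_comparison_test')
  show "summable (\<lambda>n. ((cmod (x n))\<^sup>2 + (cmod (y n))\<^sup>2) / 2)"
    using Hsp_summable[OF assms(1)] Hsp_summable[OF assms(2)] by (intro summable_divide summable_add)
  show "norm (cmod (x n) * cmod (y n)) \<le> ((cmod (x n))\<^sup>2 + (cmod (y n))\<^sup>2) / 2" for n
    using sum_squares_bound[of "cmod (x n)" "cmod (y n)"] by simp
qed

lemma summable_mult_cnj_Hsp:
  assumes "x \<in> Hsp" "y \<in> Hsp"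
  shows "summable (\<lambda>n. x n * cnj (y n))"
  by (rule summable_norm_cancel) (use summable_cmod_mult_Hsp[OF assms] in \<open>simp add: norm_mult\<close>)

lemma summable_Suc_mult_cnj_Hsp:
  assumes "x \<in> Hsp" "y \<in> Hsp"
  shows "summable (\<lambda>n. x (Suc n) * cnj (y (Suc n)))"
  using summable_mult_cnj_Hsp[OF assms] by (subst summable_Suc_iff)

lemma suminf_cmod_mult_le_l2norm:
  assumes "x \<in> Hsp" "y \<in> Hsp"
  shows "(\<Sum>n. cmod (x n) * cmod (y n)) \<le> l2norm x * l2norm y"
  unfolding l2norm_def
proof (rule le_sqrt_mult_if_le_scaled_am_gm)
  show "0 \<le> (\<Sum>n. (cmod (x n))\<^sup>2)" "0 \<le> (\<Sum>n. (cmod (y n))\<^sup>2)"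
    using Hsp_summable assms by (simp_all add: suminf_nonneg)
  fix s :: real assume "s > 0"
  have x: "summable (\<lambda>n. (cmod (x n))\<^sup>2 / s)" and y: "summable (\<lambda>n. s * (cmod (y n))\<^sup>2)"
    using Hsp_summable assms by (simp_all add: summable_divide summable_mult)
  have "(\<Sum>n. cmod (x n) * cmod (y n)) \<le> (\<Sum>n. ((cmod (x n))\<^sup>2 / s + s * (cmod (y n))\<^sup>2) / 2)"
    by (rule suminf_le)
      (use summable_cmod_mult_Hsp[OF assms] summable_divide[OF summable_add[OF x y]]
        mult_le_scaled_am_gm[OF \<open>s > 0\<close>] in auto)
  also have "\<dots> = ((\<Sum>n. (cmod (x n))\<^sup>2) / s + s * (\<Sum>n. (cmod (y n))\<^sup>2)) / 2"
    using suminf_divide[OF summable_add[OF x y], of 2] suminf_add[OF x y]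
      suminf_divide[OF Hsp_summable[OF assms(1)], of s] suminf_mult[OF Hsp_summable[OF assms(2)], of s]
    by simp
  finally show "(\<Sum>n. cmod (x n) * cmod (y n)) \<le> ((\<Sum>n. (cmod (x n))\<^sup>2) / s + s * (\<Sum>n. (cmod (y n))\<^sup>2)) / 2" .
qed

lemma norm_Bf_le:
  assumes "x \<in> Hsp" "y \<in> Hsp"
  shows "cmod (Bf x y) \<le> l2norm x * l2norm y"
proof -
  have sum: "summable (\<lambda>n. cmod (x n) * cmod (y n))" by (rule summable_cmod_mult_Hsp[OF assms])
  have "cmod (Bf x y) \<le> cmod (x 0) * cmod (y 0) + cmod (\<Sum>n. x (Suc n) * cnj (y (Suc n)))"
    unfolding Bf_def by (rule order_trans[OF norm_triangle_ineq4]) (simp add: norm_mult)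
  also have "\<dots> \<le> cmod (x 0) * cmod (y 0) + (\<Sum>n. cmod (x (Suc n)) * cmod (y (Suc n)))"
  proof -
    have "summable (\<lambda>n. norm (x (Suc n) * cnj (y (Suc n))))"
      using sum by (subst summable_Suc_iff) (simp add: norm_mult)
    from summable_norm[OF this] show ?thesis by (simp add: norm_mult)
  qed
  also have "\<dots> = (\<Sum>n. cmod (x n) * cmod (y n))"
    using suminf_split_head[OF sum] by simp
  also have "\<dots> \<le> l2norm x * l2norm y" by (rule suminf_cmod_mult_le_l2norm[OF assms])
  finally show ?thesis .
qed

lemma Hsp_vadd:
  assumes "x \<in> Hsp" "y \<in> Hsp"
  shows "vadd x y \<in> Hsp"
proof -
  have "summable (\<lambda>n. (cmod (x n + y n))\<^sup>2)"
  proof (rule summable_comparison_test')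
    show "summable (\<lambda>n. 2 * (cmod (x n))\<^sup>2 + 2 * (cmod (y n))\<^sup>2)"
      using Hsp_summable[OF assms(1)] Hsp_summable[OF assms(2)] by (intro summable_add summable_mult)
    show "norm ((cmod (x n + y n))\<^sup>2) \<le> 2 * (cmod (x n))\<^sup>2 + 2 * (cmod (y n))\<^sup>2" for n
    proof -
      have "(cmod (x n + y n))\<^sup>2 \<le> (cmod (x n) + cmod (y n))\<^sup>2"
        by (simp add: power_mono norm_triangle_ineq)
      then show ?thesis using sum_squares_bound[of "cmod (x n)" "cmod (y n)"]
        by (simp add: power2_sum)
    qed
  qed
  then show ?thesis by (simp add: Hsp_def vadd_def)
qed

lemma Hsp_smul: "x \<in> Hsp \<Longrightarrow> smul c x \<in> Hsp"
  using summable_mult[OF Hsp_summable, of x "(cmod c)\<^sup>2"]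
  by (simp add: Hsp_def smul_def norm_mult power_mult_distrib)

lemma Bf_vadd_left:
  assumes "x \<in> Hsp" "y \<in> Hsp" "z \<in> Hsp"
  shows "Bf (vadd x y) z = Bf x z + Bf y z"
proof -
  have "(\<Sum>n. (x (Suc n) + y (Suc n)) * cnj (z (Suc n))) =
      (\<Sum>n. x (Suc n) * cnj (z (Suc n))) + (\<Sum>n. y (Suc n) * cnj (z (Suc n)))"
    using suminf_add[OF summable_Suc_mult_cnj_Hsp[OF assms(1,3)] summable_Suc_mult_cnj_Hsp[OF assms(2,3)]]
    by (simp add: distrib_right)
  then show ?thesis by (simp add: Bf_def vadd_def algebra_simps)
qed

lemma Bf_smul_left:
  assumes "x \<in> Hsp" "z \<in> Hsp"
  shows "Bf (smul c x) z = c * Bf x z"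
  using suminf_mult[OF summable_Suc_mult_cnj_Hsp[OF assms], of c]
  by (simp add: Bf_def smul_def algebra_simps)

lemma Bf_cnj_commute:
  assumes "x \<in> Hsp" "y \<in> Hsp"
  shows "Bf y x = cnj (Bf x y)"
proof -
  have "(\<lambda>n. y (Suc n) * cnj (x (Suc n))) sums cnj (\<Sum>n. x (Suc n) * cnj (y (Suc n)))"
    using summable_sums[OF summable_Suc_mult_cnj_Hsp[OF assms]]
    by (subst sums_cnj[symmetric]) (simp add: mult.commute)
  then show ?thesis by (simp add: Bf_def sums_iff mult.commute)
qed

lemma Bf_vadd_right:
  assumes "x \<in> Hsp" "y \<in> Hsp" "z \<in> Hsp"
  shows "Bf z (vadd x y) = Bf z x + Bf z y"
proof -
  have "Bf z (vadd x y) = cnj (Bf (vadd x y) z)" by (rule Bf_cnj_commute[OF Hsp_vadd[OF assms(1,2)] assms(3)])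
  also have "\<dots> = cnj (Bf x z) + cnj (Bf y z)" by (simp add: Bf_vadd_left assms)
  finally show ?thesis using Bf_cnj_commute[OF assms(1,3)] Bf_cnj_commute[OF assms(2,3)] by simp
qed

lemma Bf_smul_right:
  assumes "x \<in> Hsp" "z \<in> Hsp"
  shows "Bf z (smul c x) = cnj c * Bf z x"
proof -
  have "Bf z (smul c x) = cnj (Bf (smul c x) z)" by (rule Bf_cnj_commute[OF Hsp_smul[OF assms(1)] assms(2)])
  then show ?thesis using Bf_cnj_commute[OF assms] by (simp add: Bf_smul_left assms)
qed

lemmas Bf_sesquilinear = Hsp_vadd Hsp_smul Bf_vadd_left Bf_vadd_right Bf_smul_left Bf_smul_right

lemma Qf_vadd:
  assumes "x \<in> Hsp" "y \<in> Hsp"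
  shows "Qf (vadd x y) = Qf x + Qf y + 2 * Re (Bf x y)"
  using assms Bf_cnj_commute[OF assms] by (simp add: Qf_def Bf_sesquilinear)

lemma Qf_smul:
  assumes "x \<in> Hsp"
  shows "Qf (smul c x) = (cmod c)\<^sup>2 * Qf x"
proof -
  have "Bf (smul c x) (smul c x) = (c * cnj c) * Bf x x"
    using assms by (simp add: Bf_sesquilinear mult.assoc)
  also have "c * cnj c = complex_of_real ((cmod c)\<^sup>2)" by (rule complex_norm_square[symmetric])
  finally show ?thesis by (simp add: Qf_def)
qed

section \<open>Isotropic vectors\<close>

lemma Qf_eq_if_head_zero:
  assumes "x \<in> Hsp" "x 0 = 0"
  shows "Qf x = - (\<Sum>n. (cmod (x (Suc n)))\<^sup>2)"
proof -
  have "summable (\<lambda>n. (cmod (x (Suc n)))\<^sup>2)"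
    using Hsp_summable[OF assms(1)] by (subst summable_Suc_iff)
  then have "(\<Sum>n. x (Suc n) * cnj (x (Suc n))) = complex_of_real (\<Sum>n. (cmod (x (Suc n)))\<^sup>2)"
    by (simp add: suminf_of_real flip: complex_norm_square)
  then show ?thesis by (simp add: Qf_def Bf_def assms(2))
qed

lemma isotropic_head_nonzero:
  assumes "e \<in> Hsp" "e \<noteq> (\<lambda>_. 0)" "Bf e e = 0"
  shows "e 0 \<noteq> 0"
proof
  assume head: "e 0 = 0"
  have "summable (\<lambda>n. (cmod (e (Suc n)))\<^sup>2)"
    using Hsp_summable[OF assms(1)] by (subst summable_Suc_iff)
  moreover have "(\<Sum>n. (cmod (e (Suc n)))\<^sup>2) = 0"
    using Qf_eq_if_head_zero[OF assms(1) head] assms(3) by (simp add: Qf_def)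
  ultimately have "e (Suc n) = 0" for n by (simp add: suminf_eq_zero_iff)
  then have "e = (\<lambda>_. 0)" using head by (metis not0_implies_Suc)
  with assms(2) show False by contradiction
qed

text \<open>Adding a multiple of e kills the head coordinate of w without changing Qf w, and Qf is
  nonpositive on vectors with vanishing head.\<close>
lemma Qf_nonpos_if_orth_isotropic:
  assumes e: "e \<in> Hsp" "e \<noteq> (\<lambda>_. 0)" "Bf e e = 0"
    and w: "w \<in> Hsp" "Bf w e = 0"
  shows "Qf w \<le> 0"
proof -
  define u where "u = vadd w (smul (- (w 0 / e 0)) e)"
  have u: "u \<in> Hsp" "u 0 = 0"
    using isotropic_head_nonzero[OF e] e(1) w(1) by (simp_all add: u_def Bf_sesquilinear, simp add: vadd_def smul_def)
  have "Qf w = Qf u"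
    using e w Bf_cnj_commute[OF w(1) e(1)] by (simp add: u_def Qf_vadd Qf_smul Bf_sesquilinear Qf_def)
  also have "\<dots> \<le> 0"
  proof -
    have "summable (\<lambda>n. (cmod (u (Suc n)))\<^sup>2)"
      using Hsp_summable[OF u(1)] by (subst summable_Suc_iff)
    then show ?thesis using Qf_eq_if_head_zero[OF u] by (simp add: suminf_nonneg)
  qed
  finally show ?thesis .
qed

lemma Bf_eq_0_if_null_orth_isotropic:
  assumes e: "e \<in> Hsp" "e \<noteq> (\<lambda>_. 0)" "Bf e e = 0"
    and w: "w \<in> Hsp" "Bf w e = 0" "Qf w = 0"
    and x: "x \<in> Hsp" "Bf x e = 0"
  shows "Bf w x = 0"
proof -
  define B where "B = Bf w x"
  define r where "r = 1 / (\<bar>Qf x\<bar> + 1)"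
  have r: "r > 0" "2 + r * Qf x > 0"
    unfolding r_def by (auto simp: field_simps abs_if)
  have "Bf w (smul (r * B) x) = complex_of_real r * (B * cnj B)"
    using w(1) x(1) by (simp add: Bf_sesquilinear B_def mult_ac)
  also have "B * cnj B = complex_of_real ((cmod B)\<^sup>2)" by (rule complex_norm_square[symmetric])
  finally have "Re (Bf w (smul (r * B) x)) = r * (cmod B)\<^sup>2" by simp
  then have "Qf (vadd w (smul (r * B) x)) = r * (cmod B)\<^sup>2 * (2 + r * Qf x)"
    using w x r(1) by (simp add: Qf_vadd Qf_smul Bf_sesquilinear norm_mult algebra_simps power2_eq_square)
  moreover have "Qf (vadd w (smul (r * B) x)) \<le> 0"
    by (intro Qf_nonpos_if_orth_isotropic[OF e]) (simp_all add: Bf_sesquilinear e w x)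
  ultimately have "(cmod B)\<^sup>2 \<le> 0"
    using r by (simp add: mult_le_0_iff)
  then show ?thesis by (simp add: B_def)
qed

lemma Bf_nondegenerate:
  assumes "w \<in> Hsp" "\<And>x. x \<in> Hsp \<Longrightarrow> Bf w x = 0"
  shows "w = (\<lambda>_. 0)"
proof
  fix k
  define \<delta> :: vec where "\<delta> = (\<lambda>n. if n = k then 1 else 0)"
  have "(\<lambda>n. (cmod (\<delta> n))\<^sup>2) = (\<lambda>n. if n = k then 1 else 0)"
    by (auto simp: \<delta>_def)
  then have "\<delta> \<in> Hsp"
    using summable_single[of k "\<lambda>_. 1::real"] by (simp add: Hsp_def)
  then have B: "Bf w \<delta> = 0" by (rule assms(2))
  show "w k = 0"
  proof (cases k)
    case 0
    then show ?thesis using B by (simp add: Bf_def \<delta>_def)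
  next
    case (Suc m)
    have "(\<lambda>n. w (Suc n) * cnj (\<delta> (Suc n))) = (\<lambda>n. if n = m then w k else 0)"
      by (auto simp: \<delta>_def Suc)
    then show ?thesis using B sums_unique[OF sums_single[of m "\<lambda>_. w k"]] by (simp add: Bf_def \<delta>_def Suc)
  qed
qed

lemma null_orth_hyperbolic_pair_eq_0:
  assumes e: "e \<in> Hsp" "e \<noteq> (\<lambda>_. 0)" "Bf e e = 0"
    and f: "f \<in> Hsp" "Bf e f = 1"
    and w: "w \<in> Hsp" "Bf w e = 0" "Qf w = 0" "Bf w f = 0"
  shows "w = (\<lambda>_. 0)"
proof (rule Bf_nondegenerate[OF w(1)])
  fix x assume x: "x \<in> Hsp"
  have fe: "Bf f e = 1" using Bf_cnj_commute[OF e(1) f(1)] f(2) by simp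
  define x' where "x' = vadd x (smul (- Bf x e) f)"
  have "x' \<in> Hsp" "Bf x' e = 0" using x e f fe by (simp_all add: x'_def Bf_sesquilinear)
  then have "Bf w x' = 0" by (rule Bf_eq_0_if_null_orth_isotropic[OF e w(1-3)])
  then show "Bf w x = 0" using x w f by (simp add: x'_def Bf_sesquilinear)
qed

definition gmat_xi :: "real \<Rightarrow> real \<Rightarrow> complex^2^2" where
  "gmat_xi l b = (\<chi> i j. if i = 1 then (if j = 1 then complex_of_real l else \<i> * complex_of_real b)
                          else (if j = 1 then 0 else complex_of_real (1 / l)))"

lemma gmat_eq_Sxi_conj: "gmat l b = Sxi ** gmat_xi l b ** Sxi"
  by (simp add: gmat_def gmat_xi_def)

lemma of_real_sqrt2_sq: "complex_of_real (sqrt 2) * complex_of_real (sqrt 2) = 2"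
  by (simp flip: of_real_mult)

lemma Sxi_Sxi: "Sxi ** Sxi = mat 1"
  by (simp add: vec_eq_iff forall_2 sum_2 matrix_matrix_mult_def Sxi_def mat_def of_real_sqrt2_sq)

lemma gmat_xi_mult:
  assumes "l \<noteq> 0" "l' \<noteq> 0"
  shows "gmat_xi l b ** gmat_xi l' b' = gmat_xi (l * l') (l * b' + b / l')"
  using assms by (simp add: vec_eq_iff forall_2 sum_2 matrix_matrix_mult_def gmat_xi_def field_simps)

lemma gmat_mult:
  assumes "l \<noteq> 0" "l' \<noteq> 0"
  shows "gmat l b ** gmat l' b' = gmat (l * l') (l * b' + b / l')"
proof -
  have "gmat l b ** gmat l' b' = Sxi ** gmat_xi l b ** (Sxi ** Sxi) ** gmat_xi l' b' ** Sxi"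
    by (simp add: gmat_eq_Sxi_conj matrix_mul_assoc)
  also have "\<dots> = Sxi ** (gmat_xi l b ** gmat_xi l' b') ** Sxi"
    by (simp add: Sxi_Sxi matrix_mul_assoc)
  finally show ?thesis by (simp add: gmat_xi_mult[OF assms] gmat_eq_Sxi_conj)
qed

lemma dist_gmat_unipotent: "dist (gmat 1 b) (gmat 1 0) = \<bar>b\<bar>"
proof -
  have "gmat 1 b - gmat 1 0 = (\<chi> i j. (if j = 1 then 1 else -1) * (\<i> * complex_of_real b / 2))"
    by (simp add: gmat_def vec_eq_iff forall_2 sum_2 matrix_matrix_mult_def Sxi_def algebra_simps
        of_real_sqrt2_sq)
  then show ?thesis
    by (simp add: dist_norm norm_vec_def L2_set_def sum_2 norm_mult norm_divide power_divide)
qed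

lemma gmat_in_Pgrp [simp]: "l > 0 \<Longrightarrow> gmat l b \<in> Pgrp"
  by (auto simp: Pgrp_def)

lemma smul_smul: "smul a (smul b x) = smul (a * b) x"
  by (simp add: smul_def mult.assoc)

lemma smul_one [simp]: "smul 1 x = x"
  by (simp add: smul_def)

lemma in_cline_iff: "y \<in> cline x \<longleftrightarrow> (\<exists>c. y = smul c x)"
  by (simp add: cline_def)

lemma self_in_cline: "x \<in> cline x"
  unfolding in_cline_iff by (metis smul_one)

lemma cline_in_lines: "x \<in> Hsp \<Longrightarrow> x \<noteq> (\<lambda>_. 0) \<Longrightarrow> cline x \<in> lines"
  by (auto simp: lines_def)

lemma smul_eq_smul_imp_eq:
  assumes "x \<in> Hsp" "y \<in> Hsp" "Bf x y = 1" "smul a x = smul a' x"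
  shows "a = a'"
  using arg_cong[OF assms(4), of "\<lambda>v. Bf v y"] assms(1-3) by (simp add: Bf_smul_left)

lemma cline_in_bdry_points:
  assumes "x \<in> Hsp" "x \<noteq> (\<lambda>_. 0)" "Bf x x = 0"
  shows "cline x \<in> bdry_points"
proof -
  have "lrep (cline x) \<in> cline x"
    unfolding lrep_def using someI_ex[of "\<lambda>v. v \<in> cline x \<and> v \<noteq> (\<lambda>_. 0)"] assms(2)
    by (metis in_cline_iff smul_one)
  then obtain c where "lrep (cline x) = smul c x" by (auto simp: in_cline_iff)
  then have "Qf (lrep (cline x)) = 0" using Qf_smul[OF assms(1), of c] assms(3) by (simp add: Qf_def)
  then show ?thesis using assms(1,2) by (auto simp: bdry_points_def lines_def)
qed

lemma image_cline_eq:
  assumes "T x = smul m x" "m \<noteq> 0" "\<And>c. T (smul c x) = smul c (T x)"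
  shows "T ` cline x = cline x"
proof
  show "T ` cline x \<subseteq> cline x"
  proof
    fix y assume "y \<in> T ` cline x"
    then obtain c where "y = T (smul c x)" by (auto simp: in_cline_iff)
    then have "y = smul (c * m) x" using assms(1,3) by (simp add: smul_smul)
    then show "y \<in> cline x" unfolding in_cline_iff by blast
  qed
  show "cline x \<subseteq> T ` cline x"
  proof
    fix y assume "y \<in> cline x"
    then obtain c where "y = smul c x" by (auto simp: in_cline_iff)
    then have "y = T (smul (c / m) x)" using assms by (simp add: smul_smul)
    moreover have "smul (c / m) x \<in> cline x" unfolding in_cline_iff by blast
    ultimately show "y \<in> T ` cline x" by (rule image_eqI)
  qed
qed

locale P_unitary_rep =
  fixes \<sigma> :: "complex^2^2 \<Rightarrow> vec \<Rightarrow> vec"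
  assumes unitary: "p \<in> Pgrp \<Longrightarrow> unitaryB (\<sigma> p)"
    and hom: "p \<in> Pgrp \<Longrightarrow> q \<in> Pgrp \<Longrightarrow> v \<in> Hsp \<Longrightarrow> \<sigma> (p ** q) v = \<sigma> p (\<sigma> q v)"
begin

lemma act_Hsp [simp]: "p \<in> Pgrp \<Longrightarrow> x \<in> Hsp \<Longrightarrow> \<sigma> p x \<in> Hsp"
  using unitary unfolding unitaryB_def by blast

lemma act_Bf [simp]: "p \<in> Pgrp \<Longrightarrow> x \<in> Hsp \<Longrightarrow> y \<in> Hsp \<Longrightarrow> Bf (\<sigma> p x) (\<sigma> p y) = Bf x y"
  using unitary by (auto simp: unitaryB_def)

lemma act_smul [simp]: "p \<in> Pgrp \<Longrightarrow> x \<in> Hsp \<Longrightarrow> \<sigma> p (smul c x) = smul c (\<sigma> p x)"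
  using unitary by (auto simp: unitaryB_def)

lemma act_identity [simp]: "x \<in> Hsp \<Longrightarrow> \<sigma> (gmat 1 0) x = x"
proof -
  assume x: "x \<in> Hsp"
  have "gmat 1 0 ** gmat 1 0 = gmat 1 0" by (simp add: gmat_mult)
  then have "\<sigma> (gmat 1 0) (\<sigma> (gmat 1 0) x) = \<sigma> (gmat 1 0) x"
    using hom[of "gmat 1 0" "gmat 1 0" x] x by simp
  then show ?thesis
    using unitary[of "gmat 1 0"] x by (auto simp: unitaryB_def dest: inj_onD)
qed

lemma act_unipotent_add: "x \<in> Hsp \<Longrightarrow> \<sigma> (gmat 1 (b + b')) x = \<sigma> (gmat 1 b) (\<sigma> (gmat 1 b') x)"
  using hom[of "gmat 1 b" "gmat 1 b'" x] by (simp add: gmat_mult add.commute)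

lemma act_dilation_unipotent:
  assumes "l > 0" "x \<in> Hsp"
  shows "\<sigma> (gmat l 0) (\<sigma> (gmat 1 b) x) = \<sigma> (gmat 1 (l * l * b)) (\<sigma> (gmat l 0) x)"
proof -
  have "gmat l 0 ** gmat 1 b = gmat 1 (l * l * b) ** gmat l 0"
    using assms(1) by (simp add: gmat_mult)
  then show ?thesis using assms hom by (metis gmat_in_Pgrp zero_less_one)
qed

lemma act_gmat_split:
  assumes "l > 0" "x \<in> Hsp"
  shows "\<sigma> (gmat l b) x = \<sigma> (gmat 1 (b * l)) (\<sigma> (gmat l 0) x)"
  using assms hom[of "gmat 1 (b * l)" "gmat l 0" x] by (simp add: gmat_mult)

end

section \<open>The orbit of eta2 under the unipotent subgroup\<close>

locale P_rep_with_axis = P_unitary_rep +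
  fixes \<eta>1 \<eta>2 :: vec and t :: real
  assumes \<eta>1: "\<eta>1 \<in> Hsp" "\<eta>1 \<noteq> (\<lambda>_. 0)" "Bf \<eta>1 \<eta>1 = 0"
    and \<eta>2: "\<eta>2 \<in> Hsp" "Bf \<eta>2 \<eta>2 = 0"
    and pairing: "Bf \<eta>1 \<eta>2 = 1"
    and \<eta>1_eigen: "p \<in> Pgrp \<Longrightarrow> \<sigma> p \<eta>1 \<in> cline \<eta>1"
    and \<eta>1_dilation: "l > 0 \<Longrightarrow> \<sigma> (gmat l 0) \<eta>1 = smul (complex_of_real (l powr t)) \<eta>1"
    and \<eta>2_eigen: "l > 0 \<Longrightarrow> \<sigma> (gmat l 0) \<eta>2 \<in> cline \<eta>2"
    and orbit_continuous: "\<epsilon> > 0 \<Longrightarrow> \<exists>\<delta>>0. \<forall>b. \<bar>b\<bar> < \<delta> \<longrightarrow> l2dist (\<sigma> (gmat 1 b) \<eta>2) \<eta>2 < \<epsilon>"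
begin

lemma pairing_swap: "Bf \<eta>2 \<eta>1 = 1"
  using Bf_cnj_commute[OF \<eta>1(1) \<eta>2(1)] pairing by simp

lemma act_dilation_\<eta>2:
  assumes "l > 0"
  shows "\<sigma> (gmat l 0) \<eta>2 = smul (complex_of_real (l powr - t)) \<eta>2"
proof -
  obtain \<mu> where \<mu>: "\<sigma> (gmat l 0) \<eta>2 = smul \<mu> \<eta>2"
    using \<eta>2_eigen[OF assms] by (auto simp: in_cline_iff)
  have "1 = Bf (\<sigma> (gmat l 0) \<eta>1) (\<sigma> (gmat l 0) \<eta>2)"
    using assms \<eta>1(1) \<eta>2(1) pairing by simp
  also have "\<dots> = complex_of_real (l powr t) * cnj \<mu>"
    using assms \<eta>1(1) \<eta>2(1) by (simp add: \<mu> \<eta>1_dilation Bf_sesquilinear pairing)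
  finally have "\<mu> = complex_of_real (l powr - t)"
    using assms by (simp add: powr_minus field_simps complex_eq_iff)
  then show ?thesis using \<mu> by simp
qed

lemma act_unipotent_\<eta>1: "\<sigma> (gmat 1 b) \<eta>1 = \<eta>1"
proof -
  \<comment> \<open>c is a character of (R,+) with c (2 b) = c b, hence trivial\<close>
  define c where "c b = Bf (\<sigma> (gmat 1 b) \<eta>1) \<eta>2" for b
  have c: "\<sigma> (gmat 1 b) \<eta>1 = smul (c b) \<eta>1" for b
  proof -
    obtain a where "\<sigma> (gmat 1 b) \<eta>1 = smul a \<eta>1"
      using \<eta>1_eigen[of "gmat 1 b"] by (auto simp: in_cline_iff)
    then show ?thesis using \<eta>1(1) \<eta>2(1) by (simp add: c_def Bf_smul_left pairing)
  qed
  note smul_\<eta>1_inj = smul_eq_smul_imp_eq[OF \<eta>1(1) \<eta>2(1) pairing]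
  have c_add: "c (b + b') = c b' * c b" for b b'
    by (rule smul_\<eta>1_inj) (use act_unipotent_add[OF \<eta>1(1), of b b'] \<eta>1(1) in \<open>simp add: c smul_smul\<close>)
  have "c 0 = 1"
    by (rule smul_\<eta>1_inj) (use c[of 0, symmetric] \<eta>1(1) in simp)
  then have "c b \<noteq> 0" using c_add[of b "- b"] by auto
  moreover have "c (2 * b) = c b"
  proof -
    define L where "L = complex_of_real (sqrt 2 powr t)"
    have "smul (c b * L) \<eta>1 = \<sigma> (gmat (sqrt 2) 0) (\<sigma> (gmat 1 b) \<eta>1)"
      using \<eta>1(1) by (simp add: c \<eta>1_dilation L_def smul_smul)
    also have "\<dots> = \<sigma> (gmat 1 (2 * b)) (\<sigma> (gmat (sqrt 2) 0) \<eta>1)"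
      using act_dilation_unipotent[of "sqrt 2" \<eta>1 b] \<eta>1(1) by simp
    also have "\<dots> = smul (L * c (2 * b)) \<eta>1"
      using \<eta>1(1) by (simp add: c \<eta>1_dilation L_def smul_smul)
    finally have "c b * L = L * c (2 * b)" by (rule smul_\<eta>1_inj)
    then show ?thesis by (simp add: L_def)
  qed
  moreover have "c b * c b = c (2 * b)" using c_add[of b b] by (simp only: mult_2)
  ultimately have "c b = 1" by simp
  then show ?thesis using c by simp
qed

definition orbit :: "real \<Rightarrow> vec" where
  "orbit b = \<sigma> (gmat 1 b) \<eta>2"

definition orbit_pairing :: "real \<Rightarrow> complex" where
  "orbit_pairing b = Bf (orbit b) \<eta>2"

definition orbit_offset :: "real \<Rightarrow> vec" where
  "orbit_offset b = vadd (orbit b) (smul (- 1) \<eta>2)"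

lemma orbit_Hsp [simp]: "orbit b \<in> Hsp"
  by (simp add: orbit_def \<eta>2(1))

lemma orbit_offset_Hsp [simp]: "orbit_offset b \<in> Hsp"
  by (simp add: orbit_offset_def Bf_sesquilinear \<eta>2(1))

lemma orbit_0 [simp]: "orbit 0 = \<eta>2"
  by (simp add: orbit_def \<eta>2(1))

lemma Bf_orbit_orbit: "Bf (orbit b) (orbit b') = orbit_pairing (b - b')"
proof -
  have "orbit b = \<sigma> (gmat 1 b') (orbit (b - b'))"
    using act_unipotent_add[OF \<eta>2(1), of b' "b - b'"] by (simp add: orbit_def)
  then show ?thesis by (simp add: orbit_pairing_def orbit_def \<eta>2(1))
qed

lemma orbit_pairing_0 [simp]: "orbit_pairing 0 = 0"
  by (simp add: orbit_pairing_def \<eta>2(2))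

lemma orbit_pairing_uminus: "orbit_pairing (- b) = cnj (orbit_pairing b)"
  using Bf_orbit_orbit[of 0 b] Bf_cnj_commute[OF orbit_Hsp orbit_Hsp, of b 0]
  by (simp add: orbit_pairing_def)

lemma act_dilation_orbit:
  assumes "l > 0"
  shows "\<sigma> (gmat l 0) (orbit b) = smul (complex_of_real (l powr - t)) (orbit (l * l * b))"
  using act_dilation_unipotent[OF assms \<eta>2(1)] assms \<eta>2(1)
  by (simp add: orbit_def act_dilation_\<eta>2)

lemma orbit_pairing_scale:
  assumes "l > 0"
  shows "orbit_pairing (l * l * b) = complex_of_real ((l * l) powr t) * orbit_pairing b"
proof -
  have "orbit_pairing b = Bf (\<sigma> (gmat l 0) (orbit b)) (\<sigma> (gmat l 0) \<eta>2)"
    using assms \<eta>2(1) by (simp add: orbit_pairing_def)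
  also have "\<dots> = complex_of_real ((l * l) powr - t) * orbit_pairing (l * l * b)"
    using assms \<eta>2(1)
    by (simp add: act_dilation_orbit act_dilation_\<eta>2 Bf_sesquilinear orbit_pairing_def powr_mult)
  finally show ?thesis
    using assms by (simp add: powr_minus field_simps)
qed

lemma orbit_pairing_double: "orbit_pairing (2 * b) = complex_of_real (2 powr t) * orbit_pairing b"
  using orbit_pairing_scale[of "sqrt 2" b] by simp

lemma Bf_orbit_offset:
  "Bf (orbit_offset b) (orbit_offset b') = orbit_pairing (b - b') - orbit_pairing b - cnj (orbit_pairing b')"
  using Bf_cnj_commute[OF orbit_Hsp \<eta>2(1), of b'] \<eta>2
  by (simp add: orbit_offset_def Bf_sesquilinear Bf_orbit_orbit orbit_pairing_def)

lemma Bf_orbit_offset_\<eta>1: "Bf (orbit_offset b) \<eta>1 = 0"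
proof -
  have "Bf (orbit b) \<eta>1 = 1"
    using act_Bf[of "gmat 1 b" \<eta>2 \<eta>1] \<eta>1(1) \<eta>2(1)
    by (simp add: orbit_def act_unipotent_\<eta>1 pairing_swap)
  then show ?thesis using \<eta>1(1) \<eta>2(1) by (simp add: orbit_offset_def Bf_sesquilinear pairing_swap)
qed

lemma Bf_orbit_offset_\<eta>2: "Bf (orbit_offset b) \<eta>2 = orbit_pairing b"
  using \<eta>2 by (simp add: orbit_offset_def Bf_sesquilinear orbit_pairing_def)

lemma Qf_orbit_offset: "Qf (orbit_offset b) = - 2 * Re (orbit_pairing b)"
  by (simp add: Qf_def Bf_orbit_offset)

lemma Re_orbit_pairing_nonneg: "Re (orbit_pairing b) \<ge> 0"
  using Qf_nonpos_if_orth_isotropic[OF \<eta>1 orbit_offset_Hsp Bf_orbit_offset_\<eta>1, of b]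
  by (simp add: Qf_orbit_offset)

lemma orbit_pairing_small:
  assumes "\<epsilon> > 0"
  shows "\<exists>\<delta>>0. \<forall>b. \<bar>b\<bar> < \<delta> \<longrightarrow> cmod (orbit_pairing b) < \<epsilon>"
proof -
  define N where "N = l2norm \<eta>2"
  have N: "N \<ge> 0"
    using Hsp_summable[OF \<eta>2(1)] by (simp add: N_def l2norm_def suminf_nonneg)
  obtain \<delta> where "\<delta> > 0" and \<delta>: "\<And>b. \<bar>b\<bar> < \<delta> \<Longrightarrow> l2dist (orbit b) \<eta>2 < \<epsilon> / (N + 1)"
    using orbit_continuous[of "\<epsilon> / (N + 1)"] assms N by (auto simp: orbit_def)
  have "cmod (orbit_pairing b) < \<epsilon>" if "\<bar>b\<bar> < \<delta>" for b
  proof -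
    have "l2norm (orbit_offset b) = l2dist (orbit b) \<eta>2"
      by (simp add: l2dist_def orbit_offset_def vadd_def smul_def)
    then have "cmod (orbit_pairing b) \<le> l2dist (orbit b) \<eta>2 * N"
      using norm_Bf_le[OF orbit_offset_Hsp \<eta>2(1), of b] by (simp add: Bf_orbit_offset_\<eta>2 N_def)
    also have "\<dots> \<le> \<epsilon> / (N + 1) * N"
      by (rule mult_right_mono) (use \<delta>[OF that] N in auto)
    also have "\<dots> < \<epsilon>"
      using assms N by (simp add: field_simps)
    finally show ?thesis .
  qed
  then show ?thesis using \<open>\<delta> > 0\<close> by blast
qed

lemma orbit_pairing_half_pow: "orbit_pairing 1 = complex_of_real (2 powr t) ^ n * orbit_pairing ((1 / 2) ^ n)"
proof (induction n)
  case (Suc n)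
  then show ?case
    using orbit_pairing_double[of "(1 / 2) ^ Suc n"] by simp
qed simp

lemma displacement_pos:
  assumes "orbit_pairing 1 \<noteq> 0"
  shows "t > 0"
proof (rule ccontr)
  assume "\<not> t > 0"
  then have "(2::real) powr t \<le> 2 powr 0" by (intro powr_mono) auto
  then have "(2 powr t) ^ n \<le> 1" for n by (simp add: power_le_one)
  then have lower: "cmod (orbit_pairing 1) \<le> cmod (orbit_pairing ((1 / 2) ^ n))" for n
    using orbit_pairing_half_pow[of n]
    by (simp add: norm_mult norm_power mult_left_le_one_le)
  obtain \<delta> where "\<delta> > 0" and small: "\<And>b. \<bar>b\<bar> < \<delta> \<Longrightarrow> cmod (orbit_pairing b) < cmod (orbit_pairing 1)"
    using orbit_pairing_small assms by (meson zero_less_norm_iff)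
  obtain n where "(1 / 2 :: real) ^ n < \<delta>"
    using real_arch_pow_inv[OF \<open>\<delta> > 0\<close>, of "1 / 2"] by auto
  then have "cmod (orbit_pairing ((1 / 2) ^ n)) < cmod (orbit_pairing 1)" by (intro small) simp
  with lower[of n] show False by linarith
qed

lemma displacement_le_2:
  assumes "orbit_pairing 1 \<noteq> 0"
  shows "t \<le> 2"
proof -
  define \<alpha> where "\<alpha> = orbit_pairing 1"
  define T where "T = 2 powr t"
  have cross: "Bf (orbit_offset 1) (orbit_offset (- 1)) = complex_of_real (T - 2) * \<alpha>"
    using orbit_pairing_double[of 1] by (simp add: Bf_orbit_offset orbit_pairing_uminus \<alpha>_def T_def algebra_simps)
  have Q: "Qf (orbit_offset 1) = - 2 * Re \<alpha>" "Qf (orbit_offset (- 1)) = - 2 * Re \<alpha>"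
    by (simp_all add: Qf_orbit_offset orbit_pairing_uminus \<alpha>_def)
  have "T \<le> 4"
  proof (cases "Re \<alpha> = 0")
    case True
    have "Bf (orbit_offset 1) (orbit_offset (- 1)) = 0"
      by (rule Bf_eq_0_if_null_orth_isotropic[OF \<eta>1]) (simp_all add: Q True Bf_orbit_offset_\<eta>1)
    then show ?thesis using cross assms by (simp add: \<alpha>_def del: of_real_diff)
  next
    case False
    then have "Re \<alpha> > 0" using Re_orbit_pairing_nonneg[of 1] by (simp add: \<alpha>_def)
    have "Qf (vadd (orbit_offset 1) (orbit_offset (- 1))) \<le> 0"
      by (rule Qf_nonpos_if_orth_isotropic[OF \<eta>1]) (simp_all add: Bf_sesquilinear Bf_orbit_offset_\<eta>1 \<eta>1(1))
    then have "(2 * T - 8) * Re \<alpha> \<le> 0"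
      by (simp add: Qf_vadd Q cross algebra_simps)
    then show ?thesis using \<open>Re \<alpha> > 0\<close> by (simp add: mult_le_0_iff)
  qed
  then show ?thesis using powr_le_cancel_iff[of 2 t 2] by (simp add: T_def)
qed

lemma orbit_eq_\<eta>2_rescale:
  assumes "l > 0" "orbit c = \<eta>2"
  shows "orbit (l * l * c) = \<eta>2"
proof -
  define m where "m = complex_of_real (l powr - t)"
  have "smul m (orbit (l * l * c)) = smul m \<eta>2"
    using act_dilation_orbit[OF assms(1), of c] act_dilation_\<eta>2[OF assms(1)] assms(2) by (simp add: m_def)
  then have "smul (1 / m) (smul m (orbit (l * l * c))) = smul (1 / m) (smul m \<eta>2)" by simp
  moreover have "m \<noteq> 0" using assms(1) by (simp add: m_def)
  ultimately show ?thesis by (simp add: smul_smul)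
qed

lemma orbit_eq_\<eta>2_if_orbit_pairing_1_eq_0:
  assumes "orbit_pairing 1 = 0"
  shows "orbit b = \<eta>2"
proof -
  have fixed: "orbit c = \<eta>2" if "c = 1 \<or> c = - 1" for c
  proof -
    have "orbit_pairing c = 0" using that assms by (auto simp: orbit_pairing_uminus)
    have "orbit_offset c = (\<lambda>_. 0)"
      by (rule null_orth_hyperbolic_pair_eq_0[OF \<eta>1 \<eta>2(1) pairing])
        (simp_all add: Bf_orbit_offset_\<eta>1 Bf_orbit_offset_\<eta>2 Qf_orbit_offset \<open>orbit_pairing c = 0\<close>)
    then show ?thesis by (simp add: orbit_offset_def vadd_def smul_def fun_eq_iff)
  qed
  consider "b > 0" | "b < 0" | "b = 0" by linarith
  then show ?thesis
  proof cases
    case 1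
    then show ?thesis using orbit_eq_\<eta>2_rescale[of "sqrt b" 1] fixed by simp
  next
    case 2
    then show ?thesis using orbit_eq_\<eta>2_rescale[of "sqrt (- b)" "- 1"] fixed by simp
  qed simp
qed

lemma act_cline_\<eta>2_if_orbit_pairing_1_eq_0:
  assumes "orbit_pairing 1 = 0" "p \<in> Pgrp"
  shows "\<sigma> p ` cline \<eta>2 = cline \<eta>2"
proof -
  obtain l b where p: "p = gmat l b" and "l > 0" using assms(2) by (auto simp: Pgrp_def)
  have eigen: "\<sigma> p \<eta>2 = smul (complex_of_real (l powr - t)) \<eta>2"
    using act_gmat_split[OF \<open>l > 0\<close> \<eta>2(1), of b] \<open>l > 0\<close> \<eta>2(1)
      orbit_eq_\<eta>2_if_orbit_pairing_1_eq_0[OF assms(1), of "b * l"]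
    by (simp add: p act_dilation_\<eta>2 orbit_def)
  moreover have "complex_of_real (l powr - t) \<noteq> 0" using \<open>l > 0\<close> by simp
  ultimately show ?thesis
    by (rule image_cline_eq) (simp add: assms(2) \<eta>2(1))
qed

end

theorem mainTheorem12:
  fixes \<rho> :: "complex^2^2 \<Rightarrow> vec set \<Rightarrow> vec set"
    and \<sigma> :: "complex^2^2 \<Rightarrow> vec \<Rightarrow> vec"
    and \<eta>1 \<eta>2 :: vec and t :: real
  assumes rep: "is_rep \<rho>" and irr: "irreducible_rep \<rho>"
    \<comment> \<open>eta1: isotropic representative of the unique common fixed boundary point of rho(P)\<close>
    and eta1: "\<eta>1 \<in> Hsp" "\<eta>1 \<noteq> (\<lambda>_. 0)" "Bf \<eta>1 \<eta>1 = 0"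
    and eta1_fix: "\<forall>p\<in>Pgrp. \<rho> p (cline \<eta>1) = cline \<eta>1"
    and eta1_uniq: "\<forall>L\<in>bdry_points. (\<forall>p\<in>Pgrp. \<rho> p L = L) \<longrightarrow> L = cline \<eta>1"
    \<comment> \<open>eta2: isotropic representative of the other endpoint of the common axis\<close>
    and eta2: "\<eta>2 \<in> Hsp" "\<eta>2 \<noteq> (\<lambda>_. 0)" "Bf \<eta>2 \<eta>2 = 0"
    and eta2_fix: "\<forall>l>0. \<rho> (gmat l 0) (cline \<eta>2) = cline \<eta>2"
    and eta2_ne: "cline \<eta>2 \<noteq> cline \<eta>1"
    and norm12: "Bf \<eta>1 \<eta>2 = 1"
    \<comment> \<open>sigma: continuous lift of rho restricted to P into U(B), normalized\<close>
    and lift_U: "\<forall>p\<in>Pgrp. unitaryB (\<sigma> p)"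
    and lift_hom: "\<forall>p\<in>Pgrp. \<forall>q\<in>Pgrp. \<forall>v\<in>Hsp. \<sigma> (p ** q) v = \<sigma> p (\<sigma> q v)"
    and lift_cont: "\<forall>v\<in>Hsp. \<forall>p0\<in>Pgrp. \<forall>\<epsilon>>0. \<exists>\<delta>>0. \<forall>p\<in>Pgrp.
                      dist p p0 < \<delta> \<longrightarrow> l2dist (\<sigma> p v) (\<sigma> p0 v) < \<epsilon>"
    and lift_rho: "\<forall>p\<in>Pgrp. \<forall>L\<in>lines. \<rho> p L = \<sigma> p ` L"
    and lift_pos: "\<forall>p\<in>Pgrp. Bf (\<sigma> p \<eta>1) \<eta>2 \<in> \<real> \<and> Re (Bf (\<sigma> p \<eta>1) \<eta>2) > 0"
    \<comment> \<open>chi(lambda) = lambda^t\<close>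
    and chi: "\<forall>l>0. \<sigma> (gmat l 0) \<eta>1 = smul (complex_of_real (l powr t)) \<eta>1"
  shows "0 < t \<and> t \<le> 2"
proof -
  interpret P_unitary_rep \<sigma>
    using lift_U lift_hom by unfold_locales auto
  have eigen: "\<sigma> p x \<in> cline x"
    if "p \<in> Pgrp" "x \<in> Hsp" "x \<noteq> (\<lambda>_. 0)" "\<rho> p (cline x) = cline x" for p x
    using that lift_rho cline_in_lines self_in_cline by (metis image_eqI)
  interpret P_rep_with_axis \<sigma> \<eta>1 \<eta>2 t
  proof
    fix \<epsilon> :: real assume "\<epsilon> > 0"
    then obtain \<delta> where "\<delta> > 0" and "\<forall>p\<in>Pgrp. dist p (gmat 1 0) < \<delta> \<longrightarrow> l2dist (\<sigma> p \<eta>2) \<eta>2 < \<epsilon>"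
      using lift_cont eta2(1) by (metis act_identity gmat_in_Pgrp zero_less_one)
    then show "\<exists>\<delta>>0. \<forall>b. \<bar>b\<bar> < \<delta> \<longrightarrow> l2dist (\<sigma> (gmat 1 b) \<eta>2) \<eta>2 < \<epsilon>"
      by (auto simp: dist_gmat_unipotent)
  qed (use eta1 eta2 norm12 chi eta1_fix eta2_fix eigen in auto)
  show ?thesis
  proof (cases "orbit_pairing 1 = 0")
    case True
    then have "\<forall>p\<in>Pgrp. \<rho> p (cline \<eta>2) = cline \<eta>2"
      using lift_rho cline_in_lines[OF eta2(1,2)] act_cline_\<eta>2_if_orbit_pairing_1_eq_0 by simp
    then have "cline \<eta>2 = cline \<eta>1"
      using eta1_uniq cline_in_bdry_points[OF eta2] by blast
    with eta2_ne show ?thesis by contradiction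
  next
    case False
    then show ?thesis using displacement_pos displacement_le_2 by blast
  qed
qed

end
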